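(* Let $k\in\mathbb{Z}$, and let $S=\{a_i \bmod d_i : 1\le i\le r\}$ and $S'=\{a_i-(d_i-1)k \bmod d_i : 1\le i\le r\}$ be exact covering systems. Then the map $\phi_{1,k}:\mathbb{Z}\to\mathbb{Z}$, $\phi_{1,k}(n)=n+k$, is a graph isomorphism from $G_S$ to $G_{S'}$.
   Context: A system of congruences $\{a_i \bmod d_i : 1\le i\le r\}$ with integers $a_i$ and nonzero integers $d_i$ (negative $d_i$ allowed; $n\equiv a \bmod -d$ means $n\equiv a\bmod d$) is an exact covering system if every integer satisfies exactly one of the congruences; congruences are distinguished by their chosen representatives. For such a system $S$, the exact covering system digraph $G_S$ has vertex set $\mathbb{Z}$ and edges $(n,d_in+a_i)$ for all $n\in\mathbb{Z}$, $1\le i\le r$. *)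

theory Defs
  imports "HOL-Number_Theory.Cong"
begin

text \<open>A system of congruences is given by r and families a, d indexed by 1..r;
  the congruence n = a_i (mod d_i). Congruences are distinguished by their index.\<close>

definition exact_covering_system :: "nat \<Rightarrow> (nat \<Rightarrow> int) \<Rightarrow> (nat \<Rightarrow> int) \<Rightarrow> bool" where
  "exact_covering_system r a d \<longleftrightarrow>
     (\<forall>i\<in>{1..r}. d i \<noteq> 0) \<and>
     (\<forall>n::int. \<exists>!i. i \<in> {1..r} \<and> [n = a i] (mod d i))"

definition ecs_digraph :: "nat \<Rightarrow> (nat \<Rightarrow> int) \<Rightarrow> (nat \<Rightarrow> int) \<Rightarrow> (int \<times> int) set" where
  "ecs_digraph r a d = {(n, d i * n + a i) | n i. i \<in> {1..r}}"

definition digraph_iso :: "(int \<Rightarrow> int) \<Rightarrow> (int \<times> int) set \<Rightarrow> (int \<times> int) set \<Rightarrow> bool" where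
  "digraph_iso f E E' \<longleftrightarrow> bij f \<and> (\<forall>u v. (u, v) \<in> E \<longleftrightarrow> (f u, f v) \<in> E')"

end

theory Submission
  imports Defs
begin

text \<open>Conjugating the affine map \<open>x \<mapsto> d x + a\<close> by the translation \<open>n \<mapsto> n + k\<close>
  gives \<open>x \<mapsto> d x + a - (d - 1) k\<close>.\<close>

lemma affine_eq_translate_iff:
  fixes u v a d k :: "'a::comm_ring_1"
  shows "v = d * u + a \<longleftrightarrow> v + k = d * (u + k) + (a - (d - 1) * k)"
  by (auto simp: algebra_simps)

lemma ecs_digraph_translate_iff:
  "(u, v) \<in> ecs_digraph r a d \<longleftrightarrow>
   (u + k, v + k) \<in> ecs_digraph r (\<lambda>i. a i - (d i - 1) * k) d"
  unfolding ecs_digraph_def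
  using affine_eq_translate_iff[of v "d _" u "a _" k] by blast

lemma digraph_iso_translate:
  "digraph_iso (\<lambda>n. n + k) (ecs_digraph r a d)
     (ecs_digraph r (\<lambda>i. a i - (d i - 1) * k) d)"
  unfolding digraph_iso_def using bij_plus_right ecs_digraph_translate_iff by blast

theorem mainTheorem7:
  fixes k :: int and r :: nat and a d :: "nat \<Rightarrow> int"
  assumes "exact_covering_system r a d"
    and "exact_covering_system r (\<lambda>i. a i - (d i - 1) * k) d"
  shows "digraph_iso (\<lambda>n. n + k) (ecs_digraph r a d)
           (ecs_digraph r (\<lambda>i. a i - (d i - 1) * k) d)"
  by (rule digraph_iso_translate)

end
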